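(* Let $b \ge 1$, $d=b+1$, $n=2b$, and let $f,g:\mathbb{F}_2^d\to\mathbb{F}_2$ be bipermutive local rules that are both nonlinear (algebraic degree at least $2$) and such that the no-boundary CA $F,G:\mathbb{F}_2^{2b}\to\mathbb{F}_2^b$ they define form a pair of orthogonal CA. Let $H:\mathbb{F}_2^n\to\mathbb{F}_2^n$ be the superposition S-box of $F$ and $G$. If $v\in\mathbb{F}_2^n\setminus\{\underline 0\}$ satisfies $nl(v\cdot H)=0$, then $supp(v)$ contains at least one index in $\{1,\dots,b\}$ and at least one index in $\{b+1,\dots,n\}$.
   Context: A local rule $f:\mathbb{F}_2^d\to\mathbb{F}_2$ with $d\ge 2$ is bipermutive if $f(x_1,\dots,x_d)=x_1\oplus \varphi(x_2,\dots,x_{d-1})\oplus x_d$ for some $\varphi:\mathbb{F}_2^{d-2}\to\mathbb{F}_2$. For $b=d-1$, the no-boundary CA with local rule $f$ is $F:\mathbb{F}_2^{2b}\to\mathbb{F}_2^b$, $F(x)_i=f(x_i,\dots,x_{i+b})$ for $i=1,\dots,b$. Such an $F$ defines a $2^b\times 2^b$ Latin square whose entry at row $x\in\mathbb{F}_2^b$ and column $y\in\mathbb{F}_2^b$ is $F(x\|y)$ ($\|$ = concatenation). Two such CA $F,G$ (with bipermutive rules $f,g$ of the same diameter) are orthogonal (an OCA pair) if their Latin squares are orthogonal, i.e. the map $(x,y)\mapsto (F(x\|y),G(x\|y))$ is a bijection of $\mathbb{F}_2^b\times\mathbb{F}_2^b$. The superposition S-box is $H(x)=F(x)\|G(x)$,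 i.e. $H(x)_i=f(x_i,\dots,x_{i+b})$ and $H(x)_{b+i}=g(x_i,\dots,x_{i+b})$ for $i=1,\dots,b$. For $v\in\mathbb{F}_2^n\setminus\{\underline 0\}$, $v\cdot H(x)=\bigoplus_i v_iH(x)_i$; $supp(v)=\{i: v_i\ne 0\}$. $nl(h)$ denotes the minimum Hamming distance of the Boolean function $h$ to the affine functions, so $nl(h)=0$ iff $h$ is affine. *)

theory Defs
  imports Main
begin

text \<open>Elements of F_2 are booleans (True = 1), addition is xor.
  A vector of F_2^m is a bool list of length m, indexed 0..m-1
  (index i here corresponds to index i+1 in the paper).
  A Boolean function on F_2^m is a map bool list => bool, considered on lists of length m.\<close>

definition vecs :: "nat \<Rightarrow> bool list set" where
  "vecs m = {x. length x = m}"

text \<open>Algebraic normal form: f has algebraic degree at most k iff it has an ANF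
  (coefficients a_S for S subset of the variables) using only monomials of size at most k.\<close>
definition alg_deg_le :: "nat \<Rightarrow> (bool list \<Rightarrow> bool) \<Rightarrow> nat \<Rightarrow> bool" where
  "alg_deg_le m f k \<longleftrightarrow> (\<exists>a :: nat set \<Rightarrow> bool.
      (\<forall>S. a S \<longrightarrow> S \<subseteq> {..<m} \<and> card S \<le> k) \<and>
      (\<forall>x\<in>vecs m. f x = odd (card {S. S \<subseteq> {..<m} \<and> a S \<and> (\<forall>i\<in>S. x ! i)})))"

definition alg_degree :: "nat \<Rightarrow> (bool list \<Rightarrow> bool) \<Rightarrow> nat" where
  "alg_degree m f = (LEAST k. alg_deg_le m f k)"

definition bipermutive :: "nat \<Rightarrow> (bool list \<Rightarrow> bool) \<Rightarrow> bool" where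
  "bipermutive d f \<longleftrightarrow> 2 \<le> d \<and> (\<exists>\<phi> :: bool list \<Rightarrow> bool.
      \<forall>x\<in>vecs d. f x = ((x ! 0 \<noteq> \<phi> (take (d - 2) (drop 1 x))) \<noteq> x ! (d - 1)))"

definition nbca :: "nat \<Rightarrow> (bool list \<Rightarrow> bool) \<Rightarrow> bool list \<Rightarrow> bool list" where
  "nbca b f x = map (\<lambda>i. f (take (b + 1) (drop i x))) [0..<b]"

definition orthogonal_ca :: "nat \<Rightarrow> (bool list \<Rightarrow> bool) \<Rightarrow> (bool list \<Rightarrow> bool) \<Rightarrow> bool" where
  "orthogonal_ca b f g \<longleftrightarrow>
     bij_betw (\<lambda>(x, y). (nbca b f (x @ y), nbca b g (x @ y)))
              (vecs b \<times> vecs b) (vecs b \<times> vecs b)"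

definition sbox :: "nat \<Rightarrow> (bool list \<Rightarrow> bool) \<Rightarrow> (bool list \<Rightarrow> bool) \<Rightarrow> bool list \<Rightarrow> bool list" where
  "sbox b f g x = nbca b f x @ nbca b g x"

definition component :: "nat \<Rightarrow> bool list \<Rightarrow> (bool list \<Rightarrow> bool list) \<Rightarrow> bool list \<Rightarrow> bool" where
  "component n v H x = odd (card {i. i < n \<and> v ! i \<and> H x ! i})"

definition affine_fun :: "nat \<Rightarrow> (bool list \<Rightarrow> bool) \<Rightarrow> bool" where
  "affine_fun m h \<longleftrightarrow> (\<exists>(a0::bool) (a::nat \<Rightarrow> bool).
      \<forall>x\<in>vecs m. h x = (a0 \<noteq> odd (card {i. i < m \<and> a i \<and> x ! i})))"

definition nl :: "nat \<Rightarrow> (bool list \<Rightarrow> bool) \<Rightarrow> nat" where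
  "nl m h = Min {card {x\<in>vecs m. h x \<noteq> l x} | l. affine_fun m l}"

end

theory Submission
  imports Defs
begin

text \<open>If v is supported on one half only, then v \<cdot> H is the XOR of the cells
  f(x_i, ..., x_{i+b}), i in the support. Since f is not affine, some second derivative
  D_{e_j} D_{e_k} f is nonzero; take k maximal, and let l be the largest index of the support.
  In directions j + l, k + l only cell l contributes to the second derivative of v \<cdot> H:
  later cells are not in the support, and an earlier cell would need a nonzero second
  derivative of f in a direction beyond k. So v \<cdot> H is not affine.\<close>

definition flip_coord :: "nat \<Rightarrow> bool list \<Rightarrow> bool list" where
  "flip_coord j x = x[j := \<not> x ! j]"

lemma length_flip_coord [simp]: "length (flip_coord j x) = length x"
  by (simp add: flip_coord_def)

lemma flip_coord_flip_coord [simp]: "flip_coord j (flip_coord j x) = x"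
  by (cases "j < length x") (simp_all add: flip_coord_def list_update_beyond)

lemma nth_flip_coord: "flip_coord j x ! i = (if i = j \<and> j < length x then \<not> x ! i else x ! i)"
  by (cases "j < length x") (auto simp: flip_coord_def nth_list_update list_update_beyond)

lemma take_drop_flip_coord:
  "take d (drop i (flip_coord p z)) =
    (if i \<le> p \<and> p < i + d then flip_coord (p - i) (take d (drop i z)) else take d (drop i z))"
  by (rule nth_equalityI) (auto simp: nth_flip_coord split: if_splits)

lemma flip_coord_induct [consumes 1, case_names zero flip]:
  assumes "length x = m"
    and "P (replicate m False)"
    and "\<And>y j. length y = m \<Longrightarrow> j < m \<Longrightarrow> P y \<Longrightarrow> P (flip_coord j y)"
  shows "P x"
proof -
  have "P x" if "length x = m" "\<forall>i. n \<le> i \<longrightarrow> i < m \<longrightarrow> \<not> x ! i" for n x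
    using that
  proof (induction n arbitrary: x)
    case 0
    then have "x = replicate m False" by (auto intro: nth_equalityI)
    then show ?case using assms(2) by simp
  next
    case (Suc n)
    show ?case
    proof (cases "n < m \<and> x ! n")
      case True
      then have "P (flip_coord n x)"
        using Suc.prems by (intro Suc.IH) (auto simp: nth_flip_coord le_Suc_eq)
      then show ?thesis using assms(3)[of "flip_coord n x" n] True Suc.prems by simp
    next
      case False
      then have "\<forall>i. n \<le> i \<longrightarrow> i < m \<longrightarrow> \<not> x ! i"
        using Suc.prems(2) by (metis Suc_leI le_neq_implies_less)
      then show ?thesis using Suc.IH Suc.prems(1) by blast
    qed
  qed
  then show ?thesis using assms(1) by (metis leD)
qed

definition deriv1 :: "(bool list \<Rightarrow> bool) \<Rightarrow> nat \<Rightarrow> bool list \<Rightarrow> bool" where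
  "deriv1 u j z = (u z \<noteq> u (flip_coord j z))"

definition deriv2 :: "(bool list \<Rightarrow> bool) \<Rightarrow> nat \<Rightarrow> nat \<Rightarrow> bool list \<Rightarrow> bool" where
  "deriv2 u j k z = (deriv1 u j z \<noteq> deriv1 u j (flip_coord k z))"

lemma odd_card_xor:
  assumes "finite A"
  shows "(odd (card {i\<in>A. P i}) \<noteq> odd (card {i\<in>A. Q i})) = odd (card {i\<in>A. P i \<noteq> Q i})"
  using assms
proof (induction A rule: finite_induct)
  case (insert a A)
  have "{i\<in>insert a A. R i} = (if R a then insert a {i\<in>A. R i} else {i\<in>A. R i})" for R
    by auto
  then have card_insert: "card {i\<in>insert a A. R i} =
      (if R a then Suc (card {i\<in>A. R i}) else card {i\<in>A. R i})" for R
    using insert.hyps by simp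
  show ?case
    unfolding card_insert[of P] card_insert[of Q] card_insert[of "\<lambda>i. P i \<noteq> Q i"]
    using insert.IH by auto
qed simp

lemma deriv1_odd_card:
  assumes "finite A"
  shows "deriv1 (\<lambda>z. odd (card {i\<in>A. u i z})) j z = odd (card {i\<in>A. deriv1 (u i) j z})"
  unfolding deriv1_def by (rule odd_card_xor[OF assms])

lemma deriv2_odd_card:
  assumes "finite A"
  shows "deriv2 (\<lambda>z. odd (card {i\<in>A. u i z})) j k z = odd (card {i\<in>A. deriv2 (u i) j k z})"
  unfolding deriv2_def deriv1_odd_card[OF assms] by (rule odd_card_xor[OF assms])

lemma odd_card_flip_coord:
  assumes "length x = m" "j < m"
  shows "odd (card {i. i < m \<and> a i \<and> flip_coord j x ! i}) = (odd (card {i. i < m \<and> a i \<and> x ! i}) \<noteq> a j)"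
proof -
  define B where "B = {i. i < m \<and> i \<noteq> j \<and> a i \<and> x ! i}"
  have "{i. i < m \<and> a i \<and> x ! i} = (if a j \<and> x ! j then insert j B else B)"
    and "{i. i < m \<and> a i \<and> flip_coord j x ! i} = (if a j \<and> \<not> x ! j then insert j B else B)"
    unfolding B_def using assms by (auto simp: nth_flip_coord)
  moreover have "finite B" "j \<notin> B" unfolding B_def by auto
  ultimately show ?thesis by auto
qed

lemma deriv2_affine_fun:
  assumes "affine_fun m h" "length x = m" "j < m"
  shows "\<not> deriv2 h j k x"
proof -
  obtain a0 a where h: "\<forall>y\<in>vecs m. h y = (a0 \<noteq> odd (card {i. i < m \<and> a i \<and> y ! i}))"
    using assms(1) unfolding affine_fun_def by blast
  have "deriv1 h j y = a j" if "length y = m" for y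
  proof -
    have "h y = (a0 \<noteq> odd (card {i. i < m \<and> a i \<and> y ! i}))"
      and "h (flip_coord j y) = (a0 \<noteq> odd (card {i. i < m \<and> a i \<and> flip_coord j y ! i}))"
      using h that by (simp_all add: vecs_def)
    then show ?thesis unfolding deriv1_def odd_card_flip_coord[OF that assms(3)] by argo
  qed
  then show ?thesis using assms(2) by (simp add: deriv2_def)
qed

lemma affine_funI_deriv2:
  assumes "\<forall>x\<in>vecs m. \<forall>j<m. \<forall>k<m. \<not> deriv2 h j k x"
  shows "affine_fun m h"
proof -
  define c where "c j = deriv1 h j (replicate m False)" for j
  have deriv1_const: "deriv1 h j x = c j" if "length x = m" "j < m" for j x
    using that(1)
  proof (induction rule: flip_coord_induct)
    case (flip y k)
    then have "\<not> deriv2 h j k y" using assms that(2) by (simp add: vecs_def)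
    then show ?case using flip.IH by (simp add: deriv2_def)
  qed (simp add: c_def)
  have "h x = (h (replicate m False) \<noteq> odd (card {i. i < m \<and> c i \<and> x ! i}))"
    if "length x = m" for x
    using that
  proof (induction rule: flip_coord_induct)
    case (flip y j)
    then have "h (flip_coord j y) = (h y \<noteq> c j)"
      using deriv1_const[of y j] unfolding deriv1_def by blast
    then show ?case using flip.IH odd_card_flip_coord[OF flip.hyps(1,2), of c] by argo
  qed (simp cong: conj_cong)
  then show ?thesis unfolding affine_fun_def vecs_def by blast
qed

lemma affine_fun_imp_alg_deg_le_1:
  assumes "affine_fun m h"
  shows "alg_deg_le m h 1"
proof -
  obtain a0 a where h: "\<forall>x\<in>vecs m. h x = (a0 \<noteq> odd (card {i. i < m \<and> a i \<and> x ! i}))"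
    using assms unfolding affine_fun_def by blast
  define anf where "anf S = ((S = {} \<and> a0) \<or> (\<exists>i<m. S = {i} \<and> a i))" for S :: "nat set"
  have "h x = odd (card {S. S \<subseteq> {..<m} \<and> anf S \<and> (\<forall>i\<in>S. x ! i)})" if "x \<in> vecs m" for x
  proof -
    define B where "B = {i. i < m \<and> a i \<and> x ! i}"
    have "{S. S \<subseteq> {..<m} \<and> anf S \<and> (\<forall>i\<in>S. x ! i)} = (if a0 then {{}} else {}) \<union> (\<lambda>i. {i}) ` B"
      unfolding anf_def B_def by auto
    moreover have "card ((\<lambda>i. {i}) ` B) = card B" by (rule card_image) (auto simp: inj_on_def)
    moreover have "finite B" "{} \<notin> (\<lambda>i. {i}) ` B" unfolding B_def by auto
    ultimately have "card {S. S \<subseteq> {..<m} \<and> anf S \<and> (\<forall>i\<in>S. x ! i)} = (if a0 then 1 else 0) + card B"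
      by (simp add: card_Un_disjoint)
    then show ?thesis using h that unfolding B_def by auto
  qed
  moreover have "\<forall>S. anf S \<longrightarrow> S \<subseteq> {..<m} \<and> card S \<le> 1" unfolding anf_def by auto
  ultimately show ?thesis unfolding alg_deg_le_def by blast
qed

lemma not_affine_fun_if_alg_degree_ge_2:
  assumes "alg_degree m h \<ge> 2"
  shows "\<not> affine_fun m h"
proof
  assume "affine_fun m h"
  then have "alg_degree m h \<le> 1"
    unfolding alg_degree_def by (intro Least_le affine_fun_imp_alg_deg_le_1)
  then show False using assms by simp
qed

lemma affine_fun_if_nl_eq_0:
  assumes "nl m h = 0"
  shows "affine_fun m h"
proof -
  define T where "T = {card {x\<in>vecs m. h x \<noteq> l x} | l. affine_fun m l}"
  have finite_vecs: "finite (vecs m)"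
    unfolding vecs_def using finite_lists_length_eq[of "UNIV :: bool set" m] by simp
  then have "T \<subseteq> {..card (vecs m)}" unfolding T_def by (auto intro: card_mono)
  then have "finite T" using finite_subset by blast
  moreover have "affine_fun m (\<lambda>_. False)"
    unfolding affine_fun_def by (intro exI[of _ False] exI[of _ "\<lambda>_. False"]) simp
  then have "T \<noteq> {}" unfolding T_def by blast
  ultimately have "Min T \<in> T" by (rule Min_in)
  moreover have "Min T = 0" using assms unfolding nl_def T_def .
  ultimately have "0 \<in> T" by simp
  then obtain l where "affine_fun m l" "card {x\<in>vecs m. h x \<noteq> l x} = 0"
    unfolding T_def by auto
  then have "affine_fun m l" "\<forall>x\<in>vecs m. h x = l x" using finite_vecs by auto
  then show ?thesis unfolding affine_fun_def by metis
qed

definition cells_xor :: "nat \<Rightarrow> nat set \<Rightarrow> (bool list \<Rightarrow> bool) \<Rightarrow> bool list \<Rightarrow> bool" where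
  "cells_xor d A f z = odd (card {i\<in>A. f (take d (drop i z))})"

lemma cells_xor_empty [simp]: "cells_xor d {} f z = False"
  by (simp add: cells_xor_def)

lemma deriv2_cell:
  "deriv2 (\<lambda>z. f (take d (drop i z))) j k z =
    (i \<le> j \<and> j < i + d \<and> i \<le> k \<and> k < i + d \<and> deriv2 f (j - i) (k - i) (take d (drop i z)))"
  by (auto simp: deriv2_def deriv1_def take_drop_flip_coord)

lemma not_affine_fun_obtains_last_deriv2:
  assumes "\<not> affine_fun d f"
  obtains x j k where "length x = d" "j < d" "k < d" "deriv2 f j k x"
    and "\<And>y j' k'. length y = d \<Longrightarrow> j' < d \<Longrightarrow> k < k' \<Longrightarrow> k' < d \<Longrightarrow> \<not> deriv2 f j' k' y"
proof -
  define K where "K = {k. k < d \<and> (\<exists>x\<in>vecs d. \<exists>j<d. deriv2 f j k x)}"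
  have "K \<noteq> {}" using affine_funI_deriv2 assms unfolding K_def by blast
  moreover have "finite K" unfolding K_def by simp
  ultimately have "Max K \<in> K" and Max_ge: "\<forall>k\<in>K. k \<le> Max K" by simp_all
  then obtain x j where "length x = d" "j < d" "Max K < d" "deriv2 f j (Max K) x"
    unfolding K_def vecs_def by blast
  moreover have "\<not> deriv2 f j' k' y" if "length y = d" "j' < d" "Max K < k'" "k' < d" for y j' k'
  proof
    assume "deriv2 f j' k' y"
    then have "k' \<in> K" unfolding K_def vecs_def using that by blast
    then show False using Max_ge that(3) by fastforce
  qed
  ultimately show thesis by (rule that)
qed

lemma cells_xor_not_affine_fun:
  assumes "\<not> affine_fun d f" "finite A" "A \<noteq> {}" "\<forall>i\<in>A. i + d \<le> n"
  shows "\<not> affine_fun n (cells_xor d A f)"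
proof
  assume affine: "affine_fun n (cells_xor d A f)"
  obtain x j k where x: "length x = d" "j < d" "k < d" "deriv2 f j k x"
    and last: "\<And>y j' k'. length y = d \<Longrightarrow> j' < d \<Longrightarrow> k < k' \<Longrightarrow> k' < d \<Longrightarrow> \<not> deriv2 f j' k' y"
    using not_affine_fun_obtains_last_deriv2[OF assms(1)] by blast
  define l where "l = Max A"
  have l: "l \<in> A" "\<forall>i\<in>A. i \<le> l" unfolding l_def using assms(2,3) by simp_all
  define z where "z = replicate l False @ x @ replicate (n - d - l) False"
  have "l + d \<le> n" using assms(4) l(1) by blast
  then have length_z: "length z = n" unfolding z_def using x(1) by simp
  have "{i\<in>A. deriv2 (\<lambda>z. f (take d (drop i z))) (j + l) (k + l) z} = {l}"
  proof -
    \<comment> \<open>cells after \<open>l\<close> are not in \<open>A\<close>; for a cell \<open>i < l\<close> the direction \<open>k + l - i\<close> exceeds \<open>k\<close>\<close>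
    have "take d (drop l z) = x" unfolding z_def using x(1) by simp
    then have "deriv2 (\<lambda>z. f (take d (drop l z))) (j + l) (k + l) z"
      using x by (simp add: deriv2_cell)
    moreover have "\<not> deriv2 (\<lambda>z. f (take d (drop i z))) (j + l) (k + l) z" if "i \<in> A" "i < l" for i
    proof -
      have "i + d \<le> n" using assms(4) that(1) by blast
      then have "length (take d (drop i z)) = d" using length_z by simp
      then show ?thesis using last[of "take d (drop i z)" "j + l - i" "k + l - i"] that(2)
        by (auto simp: deriv2_cell)
    qed
    ultimately show ?thesis using l by force
  qed
  then have "deriv2 (cells_xor d A f) (j + l) (k + l) z"
    unfolding cells_xor_def deriv2_odd_card[OF assms(2)] by simp
  moreover have "j + l < n" using x(2) l(1) assms(4) by fastforce
  ultimately show False using deriv2_affine_fun[OF affine length_z] by blast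
qed

lemma component_sbox:
  "component (2 * b) v (sbox b f g) z =
    (cells_xor (b + 1) {i. i < b \<and> v ! i} f z \<noteq> cells_xor (b + 1) {i. i < b \<and> v ! (b + i)} g z)"
proof -
  let ?F = "{i\<in>{i. i < b \<and> v ! i}. f (take (b + 1) (drop i z))}"
  let ?G = "{i\<in>{i. i < b \<and> v ! (b + i)}. g (take (b + 1) (drop i z))}"
  have "i \<in> {i. i < 2 * b \<and> v ! i \<and> sbox b f g z ! i} \<longleftrightarrow> i \<in> ?F \<union> (+) b ` ?G" for i
  proof (cases "i < b")
    case True
    then show ?thesis by (auto simp: sbox_def nbca_def nth_append)
  next
    case False
    then have "i \<in> (+) b ` ?G \<longleftrightarrow> i - b \<in> ?G" by force
    with False show ?thesis by (auto simp: sbox_def nbca_def nth_append)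
  qed
  then have "{i. i < 2 * b \<and> v ! i \<and> sbox b f g z ! i} = ?F \<union> (+) b ` ?G" by blast
  moreover have "card ((+) b ` ?G) = card ?G" by (simp add: card_image)
  moreover have "?F \<inter> (+) b ` ?G = {}" by auto
  ultimately show ?thesis
    unfolding component_def cells_xor_def by (simp add: card_Un_disjoint)
qed

theorem lemma2:
  fixes b :: nat and f g :: "bool list \<Rightarrow> bool" and v :: "bool list"
  assumes "b \<ge> 1"
    and "bipermutive (b + 1) f" and "bipermutive (b + 1) g"
    and "alg_degree (b + 1) f \<ge> 2" and "alg_degree (b + 1) g \<ge> 2"
    and "orthogonal_ca b f g"
    and "v \<in> vecs (2 * b)" and "\<exists>i < 2 * b. v ! i"
    and "nl (2 * b) (component (2 * b) v (sbox b f g)) = 0"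
  shows "(\<exists>i < b. v ! i) \<and> (\<exists>i. b \<le> i \<and> i < 2 * b \<and> v ! i)"
proof -
  define L where "L = {i. i < b \<and> v ! i}"
  define R where "R = {i. i < b \<and> v ! (b + i)}"
  have "component (2 * b) v (sbox b f g) = (\<lambda>z. cells_xor (b + 1) L f z \<noteq> cells_xor (b + 1) R g z)"
    unfolding L_def R_def by (intro ext component_sbox)
  then have affine: "affine_fun (2 * b) (\<lambda>z. cells_xor (b + 1) L f z \<noteq> cells_xor (b + 1) R g z)"
    using affine_fun_if_nl_eq_0[OF assms(9)] by simp
  have not_affine: "\<not> affine_fun (2 * b) (cells_xor (b + 1) A h)"
    if "A \<noteq> {}" "A \<subseteq> {..<b}" "alg_degree (b + 1) h \<ge> 2" for A h
    using that finite_subset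
    by (intro cells_xor_not_affine_fun not_affine_fun_if_alg_degree_ge_2) auto
  have bounded: "L \<subseteq> {..<b}" "R \<subseteq> {..<b}" unfolding L_def R_def by auto
  obtain i where "i < 2 * b" "v ! i" using assms(8) by blast
  then have "i \<in> L \<or> i - b \<in> R" unfolding L_def R_def by (cases "i < b") auto
  then have nonempty: "L \<noteq> {} \<or> R \<noteq> {}" by blast
  have "L \<noteq> {}"
  proof
    assume "L = {}"
    then have "affine_fun (2 * b) (cells_xor (b + 1) R g)" using affine by simp
    then show False using not_affine[OF _ bounded(2) assms(5)] \<open>L = {}\<close> nonempty by blast
  qed
  moreover have "R \<noteq> {}"
  proof
    assume "R = {}"
    then have "affine_fun (2 * b) (cells_xor (b + 1) L f)" using affine by simp
    then show False using not_affine[OF _ bounded(1) assms(4)] \<open>R = {}\<close> nonempty by blast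
  qed
  ultimately obtain i j where "i < b" "v ! i" "j < b" "v ! (b + j)" unfolding L_def R_def by blast
  moreover have "b \<le> b + j" "b + j < 2 * b" using \<open>j < b\<close> by simp_all
  ultimately show ?thesis by blast
qed

end
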